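(* Let $A$ be an $r\times r$ submatrix of a real symmetric $n\times n$ matrix. If one row of $A$ is a tropical multiple of another row of $A$, then $A$ is symmetrically tropically singular. The same holds if one column of $A$ is a tropical multiple of another column of $A$.
   Context: A row (or column) vector $u$ is a tropical multiple of $v$ if there is $c\in\mathbb R$ with $u_k=c+v_k$ for all $k$. For an $r\times r$ submatrix of a real symmetric matrix with row index set $I$ and column index set $J$, each bijection $\rho:I\to J$ gives a monomial $\prod_{i\in I}X_{i,\rho(i)}$ in commuting variables subject to the identification $X_{i,j}=X_{j,i}$, with value $\sum_{i\in I}A_{i,\rho(i)}$; the submatrix is symmetrically tropically singular if the minimum value is attained by at least two distinct monomials (distinct after the identification). *)

theory Defs
  imports Complex_Main "HOL-Library.Multiset"
begin

text \<open>A real n x n matrix is represented as a function nat => nat => real, indices in {0..<n}.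
  An r x r submatrix is given by a row index set I and a column index set J, both subsets
  of {0..<n} of cardinality r.\<close>

definition symmetric_matrix :: "nat \<Rightarrow> (nat \<Rightarrow> nat \<Rightarrow> real) \<Rightarrow> bool" where
  "symmetric_matrix n M \<longleftrightarrow> (\<forall>i<n. \<forall>j<n. M i j = M j i)"

definition trop_multiple_row :: "(nat \<Rightarrow> nat \<Rightarrow> real) \<Rightarrow> nat set \<Rightarrow> nat \<Rightarrow> nat \<Rightarrow> bool" where
  "trop_multiple_row M J i i' \<longleftrightarrow> (\<exists>c::real. \<forall>k\<in>J. M i k = c + M i' k)"

definition trop_multiple_col :: "(nat \<Rightarrow> nat \<Rightarrow> real) \<Rightarrow> nat set \<Rightarrow> nat \<Rightarrow> nat \<Rightarrow> bool" where
  "trop_multiple_col M I j j' \<longleftrightarrow> (\<exists>c::real. \<forall>k\<in>I. M k j = c + M k j')"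

text \<open>The monomial of a bijection rho : I -> J: the multiset of unordered index pairs
  {i, rho i}, i in I (this encodes the identification X_ij = X_ji).\<close>
definition sym_monomial :: "nat set \<Rightarrow> (nat \<Rightarrow> nat) \<Rightarrow> nat set multiset" where
  "sym_monomial I \<rho> = image_mset (\<lambda>i. {i, \<rho> i}) (mset_set I)"

definition trop_value :: "(nat \<Rightarrow> nat \<Rightarrow> real) \<Rightarrow> nat set \<Rightarrow> (nat \<Rightarrow> nat) \<Rightarrow> real" where
  "trop_value M I \<rho> = (\<Sum>i\<in>I. M i (\<rho> i))"

definition sym_trop_singular :: "(nat \<Rightarrow> nat \<Rightarrow> real) \<Rightarrow> nat set \<Rightarrow> nat set \<Rightarrow> bool" where
  "sym_trop_singular M I J \<longleftrightarrow>
     (\<exists>\<rho>1 \<rho>2. bij_betw \<rho>1 I J \<and> bij_betw \<rho>2 I J \<and>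
        sym_monomial I \<rho>1 \<noteq> sym_monomial I \<rho>2 \<and>
        (\<forall>\<rho>. bij_betw \<rho> I J \<longrightarrow> trop_value M I \<rho>1 \<le> trop_value M I \<rho>) \<and>
        trop_value M I \<rho>2 = trop_value M I \<rho>1)"

end

theory Submission
  imports Defs "HOL-Library.FuncSet" "HOL-Combinatorics.Transposition"
begin

text \<open>Take a bijection \<open>\<rho>\<close> of minimal value and exchange its values at two rows \<open>a \<noteq> b\<close>.
  This changes the monomial, since \<open>{a, \<rho> b}\<close> cannot occur among \<open>{a, \<rho> a}\<close>, \<open>{b, \<rho> b}\<close>,
  and it changes the value by \<open>M a (\<rho> b) + M b (\<rho> a) - M a (\<rho> a) - M b (\<rho> b)\<close>.
  If row \<open>a\<close> is row \<open>b\<close> shifted by \<open>c\<close>, both pairs of entries contain exactly one entry of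
  row \<open>a\<close>, so this difference is \<open>0\<close> and the minimum is attained twice.  For two proportional
  columns \<open>j, j'\<close> take \<open>a, b\<close> to be their preimages under \<open>\<rho>\<close>.\<close>

lemma trop_value_cong:
  assumes "\<And>i. i \<in> I \<Longrightarrow> \<rho> i = \<sigma> i"
  shows "trop_value M I \<rho> = trop_value M I \<sigma>"
  unfolding trop_value_def using assms by simp

lemma ex_min_trop_value_bij:
  assumes "finite I" "finite J" "card I = card J"
  obtains \<rho> where "bij_betw \<rho> I J"
    "\<And>\<sigma>. bij_betw \<sigma> I J \<Longrightarrow> trop_value M I \<rho> \<le> trop_value M I \<sigma>"
proof -
  \<comment> \<open>Bijections \<open>I \<rightarrow> J\<close> are arbitrary outside \<open>I\<close>; only their restrictions form a finite set.\<close>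
  let ?B = "{\<rho> \<in> I \<rightarrow>\<^sub>E J. bij_betw \<rho> I J}"
  have restrict_in_B: "restrict \<sigma> I \<in> ?B" if "bij_betw \<sigma> I J" for \<sigma>
    using that by (auto simp: bij_betw_apply cong: bij_betw_cong)
  have "finite ?B"
    using assms(1,2) by (simp add: finite_PiE)
  moreover obtain \<rho>\<^sub>0 where "bij_betw \<rho>\<^sub>0 I J"
    using assms finite_same_card_bij by blast
  then have "?B \<noteq> {}" using restrict_in_B by blast
  ultimately obtain \<rho> where "is_arg_min (trop_value M I) (\<lambda>\<rho>. \<rho> \<in> ?B) \<rho>"
    using ex_is_arg_min_if_finite by blast
  then have \<rho>: "\<rho> \<in> ?B" "\<And>\<sigma>. \<sigma> \<in> ?B \<Longrightarrow> trop_value M I \<rho> \<le> trop_value M I \<sigma>"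
    by (auto simp: is_arg_min_linorder)
  show thesis
  proof
    show "bij_betw \<rho> I J" using \<rho>(1) by blast
    fix \<sigma> assume "bij_betw \<sigma> I J"
    then have "trop_value M I \<rho> \<le> trop_value M I (restrict \<sigma> I)"
      using \<rho>(2) restrict_in_B by blast
    also have "\<dots> = trop_value M I \<sigma>" by (rule trop_value_cong) simp
    finally show "trop_value M I \<rho> \<le> trop_value M I \<sigma>" .
  qed
qed

lemma bij_betw_comp_transpose:
  assumes "bij_betw \<rho> I J" "a \<in> I" "b \<in> I"
  shows "bij_betw (\<rho> \<circ> transpose a b) I J"
  using assms by (intro bij_betw_trans[OF bij_betw_transpose_iff]) auto

lemma trop_value_comp_transpose:
  assumes "finite I" "a \<in> I" "b \<in> I" "a \<noteq> b"
  shows "trop_value M I (\<rho> \<circ> transpose a b) + M a (\<rho> a) + M b (\<rho> b)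
       = trop_value M I \<rho> + M a (\<rho> b) + M b (\<rho> a)"
proof -
  have split: "trop_value M I \<sigma> = M a (\<sigma> a) + M b (\<sigma> b) + (\<Sum>i\<in>I - {a, b}. M i (\<sigma> i))"
    for \<sigma>
    using assms unfolding trop_value_def
    by (simp add: sum.remove[of I a] sum.remove[of "I - {a}" b] Diff_insert2[symmetric])
  have "(\<Sum>i\<in>I - {a, b}. M i ((\<rho> \<circ> transpose a b) i)) = (\<Sum>i\<in>I - {a, b}. M i (\<rho> i))"
    by (rule sum.cong) auto
  then show ?thesis
    using split[of \<rho>] split[of "\<rho> \<circ> transpose a b"] by simp
qed

lemma sym_monomial_comp_transpose_neq:
  assumes "finite I" "a \<in> I" "b \<in> I" "a \<noteq> b" "\<rho> a \<noteq> \<rho> b"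
  shows "sym_monomial I (\<rho> \<circ> transpose a b) \<noteq> sym_monomial I \<rho>"
proof
  have split: "sym_monomial I \<sigma>
      = image_mset (\<lambda>i. {i, \<sigma> i}) (mset_set (I - {a, b})) + {#{a, \<sigma> a}, {b, \<sigma> b}#}" for \<sigma>
    using assms unfolding sym_monomial_def
    by (simp add: mset_set.remove[of I a] mset_set.remove[of "I - {a}" b] Diff_insert2[symmetric])
  have "image_mset (\<lambda>i. {i, (\<rho> \<circ> transpose a b) i}) (mset_set (I - {a, b}))
      = image_mset (\<lambda>i. {i, \<rho> i}) (mset_set (I - {a, b}))"
    by (rule image_mset_cong) (use assms(1) in auto)
  moreover assume "sym_monomial I (\<rho> \<circ> transpose a b) = sym_monomial I \<rho>"
  ultimately have "{#{a, \<rho> b}, {b, \<rho> a}#} = {#{a, \<rho> a}, {b, \<rho> b}#}"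
    using split[of \<rho>] split[of "\<rho> \<circ> transpose a b"] assms(4)
    by (simp add: add_mset_commute)
  then have "{a, \<rho> b} \<in> {{a, \<rho> a}, {b, \<rho> b}}"
    by (metis insert_iff set_mset_add_mset_insert set_mset_empty)
  then show False
    using assms(4,5) by (auto simp: doubleton_eq_iff)
qed

lemma sym_trop_singular_if_exchange:
  assumes "finite I" "finite J" "card I = card J"
    and exchange: "\<And>\<rho>. bij_betw \<rho> I J \<Longrightarrow>
      \<exists>a\<in>I. \<exists>b\<in>I. a \<noteq> b \<and> M a (\<rho> b) + M b (\<rho> a) = M a (\<rho> a) + M b (\<rho> b)"
  shows "sym_trop_singular M I J"
proof -
  obtain \<rho> where \<rho>: "bij_betw \<rho> I J"
    and min: "\<And>\<sigma>. bij_betw \<sigma> I J \<Longrightarrow> trop_value M I \<rho> \<le> trop_value M I \<sigma>"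
    using ex_min_trop_value_bij assms(1-3) by blast
  obtain a b where ab: "a \<in> I" "b \<in> I" "a \<noteq> b"
    and eq: "M a (\<rho> b) + M b (\<rho> a) = M a (\<rho> a) + M b (\<rho> b)"
    using exchange[OF \<rho>] by blast
  have "\<rho> a \<noteq> \<rho> b"
    using \<rho> ab by (metis bij_betw_iff_bijections)
  show ?thesis
    unfolding sym_trop_singular_def
  proof (rule exI[of _ \<rho>], rule exI[of _ "\<rho> \<circ> transpose a b"], intro conjI allI impI)
    show "bij_betw (\<rho> \<circ> transpose a b) I J"
      using bij_betw_comp_transpose[OF \<rho> ab(1,2)] .
    show "sym_monomial I \<rho> \<noteq> sym_monomial I (\<rho> \<circ> transpose a b)"
      using sym_monomial_comp_transpose_neq[OF assms(1) ab \<open>\<rho> a \<noteq> \<rho> b\<close>] by (rule not_sym)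
    show "trop_value M I (\<rho> \<circ> transpose a b) = trop_value M I \<rho>"
      using trop_value_comp_transpose[OF assms(1) ab, of M \<rho>] eq by linarith
  qed (use \<rho> min in auto)
qed

lemma exchange_if_trop_multiple_row:
  assumes "trop_multiple_row M J i i'" "bij_betw \<rho> I J" "i \<in> I" "i' \<in> I"
  shows "M i (\<rho> i') + M i' (\<rho> i) = M i (\<rho> i) + M i' (\<rho> i')"
proof -
  obtain c where "\<forall>k\<in>J. M i k = c + M i' k"
    using assms(1) unfolding trop_multiple_row_def by blast
  then show ?thesis
    using assms(2-4) by (simp add: bij_betw_apply)
qed

lemma exchange_if_trop_multiple_col:
  assumes "trop_multiple_col M I j j'" "bij_betw \<rho> I J" "j \<in> J" "j' \<in> J" "j \<noteq> j'"
  shows "\<exists>a\<in>I. \<exists>b\<in>I. a \<noteq> b \<and> M a (\<rho> b) + M b (\<rho> a) = M a (\<rho> a) + M b (\<rho> b)"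
proof -
  obtain c where c: "\<forall>k\<in>I. M k j = c + M k j'"
    using assms(1) unfolding trop_multiple_col_def by blast
  obtain a b where "a \<in> I" "b \<in> I" "\<rho> a = j" "\<rho> b = j'"
    using assms(2-4) by (metis bij_betw_imp_surj_on imageE)
  then show ?thesis
    using c assms(5) by (intro bexI[of _ a] bexI[of _ b]) auto
qed

theorem proposition4:
  fixes n r :: nat and M :: "nat \<Rightarrow> nat \<Rightarrow> real" and I J :: "nat set"
  assumes "symmetric_matrix n M"
    and "I \<subseteq> {0..<n}" and "J \<subseteq> {0..<n}" and "card I = r" and "card J = r"
    and "(\<exists>i\<in>I. \<exists>i'\<in>I. i \<noteq> i' \<and> trop_multiple_row M J i i')
         \<or> (\<exists>j\<in>J. \<exists>j'\<in>J. j \<noteq> j' \<and> trop_multiple_col M I j j')"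
  shows "sym_trop_singular M I J"
proof (rule sym_trop_singular_if_exchange)
  show "finite I" "finite J" "card I = card J"
    using assms(2-5) finite_subset by auto
  fix \<rho> assume "bij_betw \<rho> I J"
  with assms(6) show "\<exists>a\<in>I. \<exists>b\<in>I. a \<noteq> b \<and> M a (\<rho> b) + M b (\<rho> a) = M a (\<rho> a) + M b (\<rho> b)"
    using exchange_if_trop_multiple_row exchange_if_trop_multiple_col by meson
qed

end
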